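(* Under the Standing Setup (see context), Algorithm 1 is well defined: for every $k\ge0$, given $x^k\in B[\bar x,\beta]$ a point $z^k\in B(\bar x,\delta)$ as in step (a) exists. Moreover, for all $k\ge 0$, $$x^{k+1}=P_{\lambda_k}f(x^k)\quad\text{and}\quad x^k\in B[\bar x,\beta],$$ and $\sum_{k}\|x^k-x^{k+1}\|^2<\infty$.
   Context: $B(x,r)$, $B[x,r]$: open and closed Euclidean balls. For $\mu>0$: $e_\mu f(x):=\min_y\{f(y)+\frac{1}{2\mu}\|y-x\|^2\}$ (Moreau envelope), $P_\mu f(x):=\operatorname{argmin}_y\{f(y)+\frac{1}{2\mu}\|y-x\|^2\}$ (proximal operator). $\partial f$: limiting subdifferential. $f$ is $\rho$-weakly convex on $U$ if $f(\alpha x+(1-\alpha)y)\le \alpha f(x)+(1-\alpha)f(y)+\frac{\rho\alpha(1-\alpha)}{2}\|x-y\|^2$ for all $x,y\in U$, $\alpha\in[0,1]$. Standing Fact (cited): if $f$ is $\rho$-weakly convex on $\mathbb{R}^n$, $\rho>0$, $0\in\partial f(\bar x)$ and $\mu\in(0,1/\rho)$, there is $\alpha>0$ such that on $B[\bar x,\alpha]$, $P_\mu f$ is single-valued, $1/(1-\mu\rho)$-Lipschitz, equal to $(I+\mu\partial f)^{-1}$, and $e_\mu f$ is $C^1$ with $\nabla e_\mu f(x)=\mu^{-1}(x-P_\mu f(x))$. Standing Setup: $f:\mathbb{R}^n\to\mathbb{R}\cup\{+\infty\}$ is proper, lower semicontinuous, bounded below and $\rho$-weakly convex on $\mathbb{R}^n$,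 $\rho>0$; $\bar x\in\operatorname{dom}f$ with $0\in\partial f(\bar x)$. Fix $\bar\lambda>0$ and bounded sequences $\{\gamma_k\},\{\lambda_k\}$ with $0<\bar\lambda<2\gamma_k<\lambda_k<1/\rho$ for all $k$. Let $\delta>0$ be such that, for every $k$, the Standing Fact holds on $B[\bar x,\delta]$ (i.e. $\delta$ is smaller than the corresponding radius $\alpha$) for $\mu=\gamma_k$ and $\mu=\lambda_k$, and (Assumption 1) the Moreau envelopes $e_{\gamma_k}f$ and $e_{\lambda_k}f$ are convex on $B[\bar x,\delta]$. For each $k$ let $L_k:=1+\frac{\lambda_k-\gamma_k}{\gamma_k}\bigl(1+\frac{1}{1-\gamma_k\rho}\bigr)$, pick $\sigma_k\in(0,2/L_k^2)$, set $\kappa_k:=1-2\sigma_k+\sigma_k^2L_k^2$, and let $\beta>0$ satisfy $\beta<\min\{\delta,\frac{\delta}{\sigma_k}(1-\sqrt{\kappa_k})\}$ for all $k$. Algorithm 1: choose $x^0\in B[\bar x,\beta]$. Given $x^k\in B[\bar x,\beta]$: (a) compute $z^k\in B(\bar x,\delta)$ with $z^k=x^k-(\lambda_k-\gamma_k)\nabla e_{\gamma_k}f(z^k)$; (b) set $x^{k+1}=z^k-\gamma_k(\lambda_k-\gamma_k)^{-1}(x^k-z^k)$. *)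

theory Defs
  imports "HOL-Analysis.Analysis"
begin

text \<open>Extended-real-valued functions f on a Euclidean space; the value +\<infinity> encodes
  points outside the effective domain.\<close>

definition proper_fun :: "('a \<Rightarrow> ereal) \<Rightarrow> bool" where
  "proper_fun f \<longleftrightarrow> (\<forall>x. f x \<noteq> -\<infinity>) \<and> (\<exists>x. f x \<noteq> \<infinity>)"

definition lsc_fun :: "('a::topological_space \<Rightarrow> ereal) \<Rightarrow> bool" where
  "lsc_fun f \<longleftrightarrow> (\<forall>x X. X \<longlonglongrightarrow> x \<longrightarrow> f x \<le> liminf (\<lambda>n. f (X n)))"

definition bounded_below_fun :: "('a \<Rightarrow> ereal) \<Rightarrow> bool" where
  "bounded_below_fun f \<longleftrightarrow> (\<exists>m::real. \<forall>x. ereal m \<le> f x)"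

definition weakly_convex_on :: "real \<Rightarrow> 'a::real_normed_vector set \<Rightarrow> ('a \<Rightarrow> ereal) \<Rightarrow> bool" where
  "weakly_convex_on \<rho> U f \<longleftrightarrow>
     (\<forall>x\<in>U. \<forall>y\<in>U. \<forall>\<alpha>::real. 0 \<le> \<alpha> \<and> \<alpha> \<le> 1 \<longrightarrow>
        f (\<alpha> *\<^sub>R x + (1 - \<alpha>) *\<^sub>R y)
          \<le> ereal \<alpha> * f x + ereal (1 - \<alpha>) * f y + ereal (\<rho> * \<alpha> * (1 - \<alpha>) / 2 * (norm (x - y))\<^sup>2))"

definition frechet_subdiff :: "('a::real_inner \<Rightarrow> ereal) \<Rightarrow> 'a \<Rightarrow> 'a set" where
  "frechet_subdiff f x = {v. \<bar>f x\<bar> \<noteq> \<infinity> \<and>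
      (\<forall>\<epsilon>>0. \<exists>d>0. \<forall>y. norm (y - x) < d \<longrightarrow>
          ereal (real_of_ereal (f x) + inner v (y - x) - \<epsilon> * norm (y - x)) \<le> f y)}"

definition limiting_subdiff :: "('a::real_inner \<Rightarrow> ereal) \<Rightarrow> 'a \<Rightarrow> 'a set" where
  "limiting_subdiff f x = {v. \<exists>X V. X \<longlonglongrightarrow> x \<and> (\<lambda>n. f (X n)) \<longlonglongrightarrow> f x \<and> V \<longlonglongrightarrow> v \<and>
      (\<forall>n. V n \<in> frechet_subdiff f (X n))}"

definition moreau_env :: "real \<Rightarrow> ('a::real_normed_vector \<Rightarrow> ereal) \<Rightarrow> 'a \<Rightarrow> ereal" where
  "moreau_env \<mu> f x = (INF y. f y + ereal ((norm (y - x))\<^sup>2 / (2 * \<mu>)))"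

definition prox :: "real \<Rightarrow> ('a::real_normed_vector \<Rightarrow> ereal) \<Rightarrow> 'a \<Rightarrow> 'a set" where
  "prox \<mu> f x = {y. \<forall>y'. f y + ereal ((norm (y - x))\<^sup>2 / (2 * \<mu>))
                         \<le> f y' + ereal ((norm (y' - x))\<^sup>2 / (2 * \<mu>))}"

text \<open>Conclusions of the cited Standing Fact on the closed ball cball xb r for parameter mu.\<close>
definition standing_fact_on ::
  "('a::euclidean_space \<Rightarrow> ereal) \<Rightarrow> real \<Rightarrow> real \<Rightarrow> 'a \<Rightarrow> real \<Rightarrow> bool" where
  "standing_fact_on f \<rho> \<mu> xb r \<longleftrightarrow>
     (\<forall>x\<in>cball xb r. \<exists>p. prox \<mu> f x = {p}) \<and>
     (\<forall>x\<in>cball xb r. \<forall>y\<in>cball xb r.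
        dist (the_elem (prox \<mu> f x)) (the_elem (prox \<mu> f y)) \<le> (1 / (1 - \<mu> * \<rho>)) * dist x y) \<and>
     (\<forall>x\<in>cball xb r. prox \<mu> f x = {y. \<exists>v\<in>limiting_subdiff f y. x = y + \<mu> *\<^sub>R v}) \<and>
     (\<forall>x\<in>cball xb r. \<bar>moreau_env \<mu> f x\<bar> \<noteq> \<infinity> \<and>
        (GDERIV (\<lambda>u. real_of_ereal (moreau_env \<mu> f u)) x :> (1 / \<mu>) *\<^sub>R (x - the_elem (prox \<mu> f x)))) \<and>
     continuous_on (cball xb r) (\<lambda>x. (1 / \<mu>) *\<^sub>R (x - the_elem (prox \<mu> f x)))"

end

theory Submission
  imports Defs
begin

text \<open>Step (a) solves \<open>F z = x\<close> for \<open>F = I + (\<lambda> - \<gamma>) \<nabla>e\<^sub>\<gamma>f\<close>. Convexity of the envelope makes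
  its gradient monotone, so \<open>F\<close> is strongly monotone, and the Lipschitz bound on the proximal map
  makes it Lipschitz on \<open>cball xb \<delta>\<close>; the choice of \<open>\<sigma>\<close> and \<open>\<beta>\<close> turns the damped iteration
  \<open>z \<mapsto> z - \<sigma> (F z - x)\<close> into a contraction of \<open>cball xb \<delta>\<close> into itself, whose fixed point is
  the required \<open>z\<close>. The resolvent identity \<open>P\<^sub>\<mu>f = (I + \<mu>\<partial>f)\<inverse>\<close>, used for \<open>\<mu> = \<gamma>\<close> and
  \<open>\<mu> = \<lambda>\<close>, identifies step (b) with the proximal step \<open>x \<mapsto> P\<^sub>\<lambda>f x\<close>.

  Convexity of \<open>e\<^sub>\<lambda>f\<close> together with the quadratic upper bound built into its definition makes
  \<open>\<lambda> \<nabla>e\<^sub>\<lambda>f = I - P\<^sub>\<lambda>f\<close> firmly nonexpansive, so \<open>P\<^sub>\<lambda>f\<close> is nonexpansive between nearby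
  points, hence on the convex ball \<open>cball xb \<beta>\<close>; as it fixes the critical point \<open>xb\<close>, the
  iterates never leave that ball. Finally the proximal descent
  \<open>f x\<^sub>k\<^sub>+\<^sub>1 + \<parallel>x\<^sub>k\<^sub>+\<^sub>1 - x\<^sub>k\<parallel>\<^sup>2 / (2\<lambda>\<^sub>k) \<le> f x\<^sub>k\<close> telescopes, because \<open>f\<close> is bounded below
  and \<open>\<lambda>\<^sub>k < 1/\<rho>\<close>.\<close>

section \<open>Gradients of convex functions\<close>

lemma convex_on_gderiv_le:
  fixes g :: "'a::real_inner \<Rightarrow> real"
  assumes cv: "convex_on S g" and x: "x \<in> S" and v: "v \<in> S" and gd: "GDERIV g x :> d"
  shows "g x + d \<bullet> (v - x) \<le> g v"
proof -
  define h where "h t = g (x + t *\<^sub>R (v - x))" for t :: real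
  have lin: "((\<lambda>t::real. x + t *\<^sub>R (v - x)) has_derivative (\<lambda>t. t *\<^sub>R (v - x))) (at 0)"
    by (auto intro!: derivative_eq_intros)
  have "(g has_derivative (\<lambda>h. h \<bullet> d)) (at (x + 0 *\<^sub>R (v - x)))"
    using gd by (simp add: gderiv_def)
  from has_derivative_compose[OF lin this]
  have "(h has_derivative (\<lambda>t. ((v - x) \<bullet> d) * t)) (at 0)"
    by (simp add: h_def[abs_def] o_def mult.commute)
  hence "(h has_real_derivative ((v - x) \<bullet> d)) (at 0)"
    by (simp add: has_field_derivative_def)
  hence "((\<lambda>t. (h t - h 0) / t) \<longlongrightarrow> (v - x) \<bullet> d) (at_right 0)"
    by (simp add: DERIV_def filterlim_at_split)
  moreover have "\<forall>\<^sub>F t in at_right 0. (h t - h 0) / t \<le> g v - g x"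
    using eventually_at_right_real[OF zero_less_one]
  proof eventually_elim
    case (elim t)
    have "x + t *\<^sub>R (v - x) = (1 - t) *\<^sub>R x + t *\<^sub>R v" by (simp add: algebra_simps)
    hence "h t \<le> (1 - t) * g x + t * g v"
      unfolding h_def using convex_onD[OF cv, of t x v] elim x v by simp
    thus ?case using elim by (simp add: h_def divide_simps algebra_simps)
  qed
  ultimately have "(v - x) \<bullet> d \<le> g v - g x"
    by (rule tendsto_le[OF trivial_limit_at_right_real tendsto_const])
  thus ?thesis by (simp add: inner_commute)
qed

lemma convex_on_gderiv_monotone:
  fixes g :: "'a::real_inner \<Rightarrow> real"
  assumes "convex_on S g" "x \<in> S" "y \<in> S" "GDERIV g x :> dx" "GDERIV g y :> dy"
  shows "0 \<le> (dx - dy) \<bullet> (x - y)"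
  using convex_on_gderiv_le[OF assms(1,2,3,4)] convex_on_gderiv_le[OF assms(1,3,2,5)]
  by (simp add: inner_diff_left inner_diff_right inner_commute)

lemma GDERIV_unique:
  assumes "GDERIV h z :> g" "GDERIV h z :> g'"
  shows "g = g'"
proof -
  have "(\<lambda>v. v \<bullet> g) = (\<lambda>v. v \<bullet> g')"
    using has_derivative_unique assms unfolding gderiv_def by blast
  hence "(g - g') \<bullet> (g - g') = 0" by (metis inner_diff_left inner_commute right_minus_eq)
  thus ?thesis by simp
qed

section \<open>Nonexpansive and contractive maps\<close>

lemma nonexpansive_of_id_minus_gradient:
  fixes E :: "'a::real_inner \<Rightarrow> real" and P :: "'a \<Rightarrow> 'a"
  assumes lower: "\<And>a b. a \<in> S \<Longrightarrow> b \<in> S \<Longrightarrow> E a + (a - P a) \<bullet> (b - a) \<le> E b"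
    and upper: "\<And>a u. a \<in> S \<Longrightarrow> u \<in> S \<Longrightarrow>
        E u \<le> E a + (a - P a) \<bullet> (u - a) + (norm (u - a))\<^sup>2 / 2"
    and a: "a \<in> S" and b: "b \<in> S"
    and shifted: "b - ((b - P b) - (a - P a)) \<in> S" "a + ((b - P b) - (a - P a)) \<in> S"
  shows "norm (P a - P b) \<le> norm (a - b)"
proof -
  define Wa Wb where "Wa = a - P a" and "Wb = b - P b"
  define D where "D = Wb - Wa"
  have 1: "E a + Wa \<bullet> ((b - D) - a) \<le> E (b - D)"
    and 2: "E (b - D) \<le> E b + Wb \<bullet> ((b - D) - b) + (norm ((b - D) - b))\<^sup>2 / 2"
    and 3: "E b + Wb \<bullet> ((a + D) - b) \<le> E (a + D)"
    and 4: "E (a + D) \<le> E a + Wa \<bullet> ((a + D) - a) + (norm ((a + D) - a))\<^sup>2 / 2"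
    using lower upper a b shifted unfolding D_def Wa_def Wb_def by blast+
  have "(norm ((b - D) - b))\<^sup>2 = (norm D)\<^sup>2" "(norm ((a + D) - a))\<^sup>2 = (norm D)\<^sup>2" by simp_all
  with 1 2 3 4 have "Wa \<bullet> ((b - D) - a) + Wb \<bullet> ((a + D) - b)
      \<le> Wb \<bullet> ((b - D) - b) + Wa \<bullet> ((a + D) - a) + (norm D)\<^sup>2"
    by linarith
  \<comment> \<open>i.e. the gradient \<open>a - P a\<close> is firmly nonexpansive\<close>
  hence "D \<bullet> D \<le> D \<bullet> (b - a)"
    unfolding D_def power2_norm_eq_inner
    by (simp add: inner_diff_left inner_diff_right inner_add_left inner_add_right inner_commute)
  moreover have "P a - P b = (a - b) + D" by (simp add: D_def Wa_def Wb_def algebra_simps)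
  hence "(norm (P a - P b))\<^sup>2 = (norm (a - b))\<^sup>2 - 2 * (D \<bullet> (b - a)) + D \<bullet> D"
    by (simp add: power2_norm_eq_inner inner_add_left inner_add_right inner_diff_left inner_diff_right inner_commute)
  moreover have "0 \<le> D \<bullet> D" by simp
  ultimately have "(norm (P a - P b))\<^sup>2 \<le> (norm (a - b))\<^sup>2" by linarith
  thus ?thesis by (rule power2_le_imp_le) simp
qed

lemma locally_nonexpansive_imp_nonexpansive:
  fixes P :: "'a::real_normed_vector \<Rightarrow> 'b::metric_space"
  assumes S: "convex S" and \<eta>: "\<eta> > 0"
    and local: "\<And>a b. a \<in> S \<Longrightarrow> b \<in> S \<Longrightarrow> dist a b \<le> \<eta> \<Longrightarrow> dist (P a) (P b) \<le> dist a b"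
    and x: "x \<in> S" and y: "y \<in> S"
  shows "dist (P x) (P y) \<le> dist x y"
proof -
  obtain n :: nat where n: "dist x y / \<eta> < n" using reals_Archimedean2 by blast
  hence n_pos: "n > 0" using \<eta> by (metis divide_nonneg_pos not_gr_zero of_nat_0 not_less zero_le_dist)
  define p where "p i = y + (real i / real n) *\<^sub>R (x - y)" for i
  have p_in: "p i \<in> S" if "i \<le> n" for i
  proof -
    have "p i = (1 - real i / real n) *\<^sub>R y + (real i / real n) *\<^sub>R x"
      by (simp add: p_def algebra_simps)
    thus ?thesis using convexD[OF S y x] that n_pos by simp
  qed
  have step: "dist (p (Suc i)) (p i) = dist x y / n" for i
  proof -
    have "p (Suc i) - p i = (1 / real n) *\<^sub>R (x - y)"
      by (simp add: p_def add_divide_distrib scaleR_add_left)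
    thus ?thesis by (simp add: dist_norm)
  qed
  have step_le: "dist x y / n \<le> \<eta>" using n \<eta> n_pos by (simp add: field_simps)
  have "dist (P (p i)) (P y) \<le> real i * (dist x y / n)" if "i \<le> n" for i
    using that
  proof (induction i)
    case 0
    then show ?case by (simp add: p_def)
  next
    case (Suc i)
    have "dist (P (p (Suc i))) (P (p i)) \<le> dist x y / n"
      using local[OF p_in[OF Suc.prems] p_in[of i]] Suc.prems step[of i] step_le by simp
    moreover have "real (Suc i) * (dist x y / n) = dist x y / n + real i * (dist x y / n)"
      by (simp add: algebra_simps add_divide_distrib)
    ultimately show ?case
      using Suc dist_triangle[of "P (p (Suc i))" "P y" "P (p i)"] by linarith
  qed
  from this[of n] n_pos show ?thesis by (simp add: p_def)
qed

lemma strongly_monotone_lipschitz_step_contraction: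
  fixes F :: "'a::real_inner \<Rightarrow> 'a"
  assumes mono: "(norm (z - w))\<^sup>2 \<le> (z - w) \<bullet> (F z - F w)"
    and lip: "norm (F z - F w) \<le> L * norm (z - w)" and \<sigma>: "\<sigma> \<ge> 0"
  shows "norm ((z - \<sigma> *\<^sub>R F z) - (w - \<sigma> *\<^sub>R F w))
      \<le> sqrt (1 - 2 * \<sigma> + \<sigma>\<^sup>2 * L\<^sup>2) * norm (z - w)"
proof -
  define D DF where "D = z - w" and "DF = F z - F w"
  have "(norm DF)\<^sup>2 \<le> (L * norm D)\<^sup>2"
    using lip by (intro power_mono) (auto simp: D_def DF_def)
  hence "\<sigma>\<^sup>2 * (norm DF)\<^sup>2 \<le> \<sigma>\<^sup>2 * L\<^sup>2 * (norm D)\<^sup>2"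
    by (simp add: mult_left_mono power_mult_distrib mult.assoc)
  moreover have "2 * \<sigma> * (norm D)\<^sup>2 \<le> 2 * \<sigma> * (D \<bullet> DF)"
    using mult_left_mono[OF mono] \<sigma> by (simp add: D_def DF_def)
  moreover have "(norm (D - \<sigma> *\<^sub>R DF))\<^sup>2 = (norm D)\<^sup>2 - 2 * \<sigma> * (D \<bullet> DF) + \<sigma>\<^sup>2 * (norm DF)\<^sup>2"
    unfolding power2_norm_eq_inner
    by (simp add: inner_diff_left inner_diff_right inner_commute power2_eq_square algebra_simps)
  ultimately have "(norm (D - \<sigma> *\<^sub>R DF))\<^sup>2 \<le> (1 - 2 * \<sigma> + \<sigma>\<^sup>2 * L\<^sup>2) * (norm D)\<^sup>2"
    by (simp add: algebra_simps)
  hence "norm (D - \<sigma> *\<^sub>R DF) \<le> sqrt ((1 - 2 * \<sigma> + \<sigma>\<^sup>2 * L\<^sup>2) * (norm D)\<^sup>2)"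
    using real_sqrt_le_mono by fastforce
  also have "\<dots> = sqrt (1 - 2 * \<sigma> + \<sigma>\<^sup>2 * L\<^sup>2) * norm D" by (simp add: real_sqrt_mult)
  also have "D - \<sigma> *\<^sub>R DF = (z - \<sigma> *\<^sub>R F z) - (w - \<sigma> *\<^sub>R F w)"
    by (simp add: D_def DF_def algebra_simps)
  finally show ?thesis unfolding D_def .
qed

text \<open>The solution is the Banach fixed point of the damped iteration \<open>z \<mapsto> z - \<sigma> (F z - x)\<close>.\<close>

lemma strongly_monotone_lipschitz_locally_onto:
  fixes F :: "'a::{real_inner, complete_space} \<Rightarrow> 'a"
  assumes mono: "\<And>z w. z \<in> cball c \<delta> \<Longrightarrow> w \<in> cball c \<delta> \<Longrightarrow> (norm (z - w))\<^sup>2 \<le> (z - w) \<bullet> (F z - F w)"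
    and lip: "\<And>z w. z \<in> cball c \<delta> \<Longrightarrow> w \<in> cball c \<delta> \<Longrightarrow> norm (F z - F w) \<le> L * norm (z - w)"
    and L: "L \<ge> 1" and Fc: "F c = c" and \<sigma>: "0 < \<sigma>" "\<sigma> < 2 / L\<^sup>2"
    and x: "\<sigma> * dist c x < \<delta> * (1 - sqrt (1 - 2 * \<sigma> + \<sigma>\<^sup>2 * L\<^sup>2))"
  shows "\<exists>z\<in>ball c \<delta>. F z = x"
proof -
  define \<kappa> where "\<kappa> = 1 - 2 * \<sigma> + \<sigma>\<^sup>2 * L\<^sup>2"
  define \<Phi> where "\<Phi> z = z - \<sigma> *\<^sub>R (F z - x)" for z
  have "0 \<le> \<sigma>\<^sup>2 * (L\<^sup>2 - 1)" using L by (simp add: one_le_power)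
  hence "0 \<le> \<kappa>"
    using zero_le_power2[of "1 - \<sigma>"] by (simp add: \<kappa>_def power2_diff algebra_simps)
  moreover have "\<kappa> < 1"
    using \<sigma> L by (simp add: \<kappa>_def field_simps power2_eq_square)
  ultimately have q: "0 \<le> sqrt \<kappa>" "sqrt \<kappa> < 1" by auto
  have contraction: "dist (\<Phi> z) (\<Phi> w) \<le> sqrt \<kappa> * dist z w"
    if "z \<in> cball c \<delta>" "w \<in> cball c \<delta>" for z w
    using strongly_monotone_lipschitz_step_contraction[OF mono[OF that] lip[OF that], of \<sigma>] \<sigma>
    by (simp add: \<Phi>_def \<kappa>_def dist_norm algebra_simps)
  have \<delta>: "0 < \<delta>"
  proof (rule ccontr)
    assume "\<not> 0 < \<delta>"
    hence "\<delta> * (1 - sqrt \<kappa>) \<le> 0" using q by (simp add: mult_nonpos_nonneg)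
    moreover have "0 \<le> \<sigma> * dist c x" using \<sigma> by simp
    ultimately show False using x by (simp add: \<kappa>_def)
  qed
  have into: "\<Phi> z \<in> ball c \<delta>" if "z \<in> cball c \<delta>" for z
  proof -
    have "dist c (\<Phi> z) \<le> dist c (\<Phi> c) + dist (\<Phi> c) (\<Phi> z)" by (rule dist_triangle)
    also have "dist c (\<Phi> c) = \<sigma> * dist c x"
      using \<sigma> by (simp add: \<Phi>_def Fc dist_norm norm_minus_commute)
    also have "dist (\<Phi> c) (\<Phi> z) \<le> sqrt \<kappa> * \<delta>"
      using contraction[of c z] that \<delta> q(1) mult_left_mono[of "dist c z" \<delta> "sqrt \<kappa>"] by simp
    finally show ?thesis using x by (simp add: \<kappa>_def algebra_simps)
  qed
  have "\<exists>!z\<in>cball c \<delta>. \<Phi> z = z"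
    by (rule Banach_fix[OF _ _ q]) (use \<delta> into contraction in \<open>auto simp: complete_eq_closed less_imp_le\<close>)
  then obtain z where z: "z \<in> cball c \<delta>" "\<Phi> z = z" by blast
  hence "F z = x" using \<sigma> by (simp add: \<Phi>_def)
  thus ?thesis using into[OF z(1)] z(2) by auto
qed

section \<open>Moreau envelope and proximal points\<close>

lemma moreau_env_le: "moreau_env \<mu> f x \<le> f y + ereal ((norm (y - x))\<^sup>2 / (2 * \<mu>))"
  unfolding moreau_env_def by (rule INF_lower) simp

lemma moreau_env_eq_prox:
  assumes "p \<in> prox \<mu> f x"
  shows "moreau_env \<mu> f x = f p + ereal ((norm (p - x))\<^sup>2 / (2 * \<mu>))"
  using assms unfolding prox_def by (intro antisym moreau_env_le) (auto simp: moreau_env_def intro: INF_greatest)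

lemma moreau_env_quadratic_upper_bound:
  assumes p: "p \<in> prox \<mu> f a" and \<mu>: "\<mu> > 0"
    and fin: "\<bar>moreau_env \<mu> f a\<bar> \<noteq> \<infinity>" "\<bar>moreau_env \<mu> f u\<bar> \<noteq> \<infinity>"
  shows "\<mu> * real_of_ereal (moreau_env \<mu> f u)
      \<le> \<mu> * real_of_ereal (moreau_env \<mu> f a) + (a - p) \<bullet> (u - a) + (norm (u - a))\<^sup>2 / 2"
proof -
  have env_a: "moreau_env \<mu> f a = f p + ereal ((norm (p - a))\<^sup>2 / (2 * \<mu>))"
    using moreau_env_eq_prox[OF p] .
  then obtain c where c: "f p = ereal c" using fin(1) by (cases "f p") auto
  have "moreau_env \<mu> f u \<le> ereal (c + (norm (p - u))\<^sup>2 / (2 * \<mu>))"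
    using moreau_env_le[of \<mu> f u p] by (simp add: c)
  hence "real_of_ereal (moreau_env \<mu> f u) \<le> c + (norm (p - u))\<^sup>2 / (2 * \<mu>)"
    using fin(2) by (cases "moreau_env \<mu> f u") auto
  hence "\<mu> * real_of_ereal (moreau_env \<mu> f u) \<le> \<mu> * c + (norm (p - u))\<^sup>2 / 2"
    using \<mu> mult_left_mono[of _ _ \<mu>] by (fastforce simp: algebra_simps)
  moreover have "\<mu> * real_of_ereal (moreau_env \<mu> f a) = \<mu> * c + (norm (p - a))\<^sup>2 / 2"
    using \<mu> by (simp add: env_a c algebra_simps)
  moreover have "(norm (p - u))\<^sup>2 = (norm (p - a))\<^sup>2 + 2 * ((a - p) \<bullet> (u - a)) + (norm (u - a))\<^sup>2"
    unfolding power2_norm_eq_inner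
    by (simp add: inner_diff_left inner_diff_right inner_commute)
  ultimately show ?thesis by linarith
qed

lemma prox_descent:
  assumes "p \<in> prox \<mu> f x"
  shows "f p + ereal ((norm (p - x))\<^sup>2 / (2 * \<mu>)) \<le> f x"
proof -
  have "f p + ereal ((norm (p - x))\<^sup>2 / (2 * \<mu>)) \<le> f x + ereal ((norm (x - x))\<^sup>2 / (2 * \<mu>))"
    using assms unfolding prox_def by blast
  thus ?thesis by (simp add: zero_ereal_def[symmetric])
qed

lemma prox_value_finite:
  assumes f: "proper_fun f" and p: "p \<in> prox \<mu> f x"
  shows "f p \<noteq> \<infinity>"
proof
  assume "f p = \<infinity>"
  obtain y where "f y \<noteq> \<infinity>" "f y \<noteq> -\<infinity>" using f unfolding proper_fun_def by blast
  moreover have "f p + ereal ((norm (p - x))\<^sup>2 / (2 * \<mu>)) \<le> f y + ereal ((norm (y - x))\<^sup>2 / (2 * \<mu>))"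
    using p unfolding prox_def by blast
  ultimately show False using \<open>f p = \<infinity>\<close> by (cases "f y") auto
qed

lemma standing_fact_prox_singleton:
  assumes "standing_fact_on f \<rho> \<mu> xb r" "x \<in> cball xb r"
  shows "prox \<mu> f x = {the_elem (prox \<mu> f x)}"
  using assms unfolding standing_fact_on_def by (metis the_elem_eq)

lemma standing_fact_mem_prox_iff:
  assumes "standing_fact_on f \<rho> \<mu> xb r" "x \<in> cball xb r"
  shows "y \<in> prox \<mu> f x \<longleftrightarrow> (\<exists>v\<in>limiting_subdiff f y. x = y + \<mu> *\<^sub>R v)"
  using assms unfolding standing_fact_on_def by blast

lemma standing_fact_prox_lipschitz:
  assumes "standing_fact_on f \<rho> \<mu> xb r" "x \<in> cball xb r" "y \<in> cball xb r"
  shows "dist (the_elem (prox \<mu> f x)) (the_elem (prox \<mu> f y)) \<le> 1 / (1 - \<mu> * \<rho>) * dist x y"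
  using assms unfolding standing_fact_on_def by blast

lemma standing_fact_moreau_env:
  assumes "standing_fact_on f \<rho> \<mu> xb r" "x \<in> cball xb r"
  shows "\<bar>moreau_env \<mu> f x\<bar> \<noteq> \<infinity>"
    and "GDERIV (\<lambda>u. real_of_ereal (moreau_env \<mu> f u)) x :> (1 / \<mu>) *\<^sub>R (x - the_elem (prox \<mu> f x))"
  using assms unfolding standing_fact_on_def by auto

lemma standing_fact_prox_centre:
  assumes sf: "standing_fact_on f \<rho> \<mu> xb r" and r: "r \<ge> 0" and crit: "0 \<in> limiting_subdiff f xb"
  shows "the_elem (prox \<mu> f xb) = xb"
proof -
  have "xb \<in> cball xb r" using r by simp
  moreover from this have "xb \<in> prox \<mu> f xb"
    using standing_fact_mem_prox_iff[OF sf] crit by force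
  ultimately show ?thesis using standing_fact_prox_singleton[OF sf] by (metis singletonD)
qed

lemma prox_locally_nonexpansive:
  fixes f :: "'a::euclidean_space \<Rightarrow> ereal"
  assumes sf: "standing_fact_on f \<rho> \<mu> xb \<delta>"
    and cv: "convex_on (cball xb \<delta>) (\<lambda>x. real_of_ereal (moreau_env \<mu> f x))"
    and \<mu>: "0 < \<mu>" "\<mu> * \<rho> < 1"
    and a: "a \<in> cball xb \<beta>" and b: "b \<in> cball xb \<beta>"
    and ab: "(1 + 1 / (1 - \<mu> * \<rho>)) * dist a b \<le> \<delta> - \<beta>"
  shows "dist (the_elem (prox \<mu> f a)) (the_elem (prox \<mu> f b)) \<le> dist a b"
proof -
  define S where "S = cball xb \<delta>"
  define P where "P x = the_elem (prox \<mu> f x)" for x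
  define E where "E x = \<mu> * real_of_ereal (moreau_env \<mu> f x)" for x
  have lower: "E a + (a - P a) \<bullet> (b - a) \<le> E b" if "a \<in> S" "b \<in> S" for a b
  proof -
    have "real_of_ereal (moreau_env \<mu> f a) + ((1 / \<mu>) *\<^sub>R (a - P a)) \<bullet> (b - a)
        \<le> real_of_ereal (moreau_env \<mu> f b)"
      using convex_on_gderiv_le[OF cv] standing_fact_moreau_env(2)[OF sf] that
      unfolding S_def P_def by blast
    from mult_left_mono[OF this, of \<mu>] show ?thesis using \<mu> by (simp add: E_def algebra_simps)
  qed
  have upper: "E u \<le> E a + (a - P a) \<bullet> (u - a) + (norm (u - a))\<^sup>2 / 2" if "a \<in> S" "u \<in> S" for a u
    unfolding E_def P_def
    using moreau_env_quadratic_upper_bound standing_fact_prox_singleton[OF sf] \<mu>(1)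
      standing_fact_moreau_env(1)[OF sf] that unfolding S_def by (metis insertI1)
  have "1 \<le> 1 + 1 / (1 - \<mu> * \<rho>)" using \<mu>(2) by simp
  hence "dist a b \<le> \<delta> - \<beta>" using ab mult_right_mono[of 1 _ "dist a b"] by fastforce
  hence "\<beta> \<le> \<delta>" using zero_le_dist[of a b] by linarith
  hence \<beta>\<delta>: "a \<in> S" "b \<in> S" using a b by (auto simp: S_def)
  have "norm ((b - P b) - (a - P a)) \<le> norm (b - a) + norm (P b - P a)"
    by (metis norm_triangle_ineq4 diff_diff_eq2 diff_add_eq add_diff_eq diff_diff_add)
  also have "\<dots> \<le> (1 + 1 / (1 - \<mu> * \<rho>)) * dist a b"
    using standing_fact_prox_lipschitz[OF sf, of b a] \<beta>\<delta>
    by (simp add: P_def S_def dist_norm norm_minus_commute algebra_simps)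
  finally have shift: "norm ((b - P b) - (a - P a)) \<le> \<delta> - \<beta>" using ab by linarith
  define w where "w = (b - P b) - (a - P a)"
  have "dist b (b - w) = norm w" "dist a (a + w) = norm w" by (simp_all add: dist_norm)
  hence "b - w \<in> S" "a + w \<in> S"
    using shift a b dist_triangle[of xb "b - w" b] dist_triangle[of xb "a + w" a]
    by (auto simp: S_def w_def[symmetric])
  from nonexpansive_of_id_minus_gradient[OF lower upper \<beta>\<delta>(1,2) this[unfolded w_def]]
  show ?thesis by (simp add: P_def dist_norm)
qed

lemma prox_dist_centre_le:
  fixes f :: "'a::euclidean_space \<Rightarrow> ereal"
  assumes sf: "standing_fact_on f \<rho> \<mu> xb \<delta>"
    and cv: "convex_on (cball xb \<delta>) (\<lambda>x. real_of_ereal (moreau_env \<mu> f x))"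
    and \<mu>: "0 < \<mu>" "\<mu> * \<rho> < 1" and crit: "0 \<in> limiting_subdiff f xb"
    and \<beta>: "0 \<le> \<beta>" "\<beta> < \<delta>" and x: "x \<in> cball xb \<beta>"
  shows "dist (the_elem (prox \<mu> f x)) xb \<le> dist x xb"
proof -
  define L where "L = 1 + 1 / (1 - \<mu> * \<rho>)"
  have L: "L > 0" using \<mu>(2) by (simp add: L_def add_pos_nonneg)
  have "dist (the_elem (prox \<mu> f x)) (the_elem (prox \<mu> f xb)) \<le> dist x xb"
  proof (rule locally_nonexpansive_imp_nonexpansive[of _ "(\<delta> - \<beta>) / L"])
    show "(\<delta> - \<beta>) / L > 0" using \<beta> L by simp
    show "dist (the_elem (prox \<mu> f a)) (the_elem (prox \<mu> f b)) \<le> dist a b"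
      if "a \<in> cball xb \<beta>" "b \<in> cball xb \<beta>" "dist a b \<le> (\<delta> - \<beta>) / L" for a b
      using prox_locally_nonexpansive[OF sf cv \<mu> that(1,2)] that(3) L
      by (simp add: L_def field_simps)
  qed (use x \<beta> in auto)
  thus ?thesis using standing_fact_prox_centre[OF sf _ crit] \<beta> by simp
qed

section \<open>The iteration\<close>

lemma backward_step_exists:
  fixes f :: "'a::euclidean_space \<Rightarrow> ereal"
  assumes sf: "standing_fact_on f \<rho> \<gamma> xb \<delta>"
    and cv: "convex_on (cball xb \<delta>) (\<lambda>x. real_of_ereal (moreau_env \<gamma> f x))"
    and \<gamma>: "0 < \<gamma>" "\<gamma> * \<rho> < 1" and T: "T > 0" and crit: "0 \<in> limiting_subdiff f xb"
    and \<delta>: "0 < \<delta>" and \<sigma>: "0 < \<sigma>" "\<sigma> < 2 / (1 + T / \<gamma> * (1 + 1 / (1 - \<gamma> * \<rho>)))\<^sup>2"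
    and \<beta>: "\<beta> < \<delta> / \<sigma> * (1 - sqrt (1 - 2 * \<sigma> + \<sigma>\<^sup>2 * (1 + T / \<gamma> * (1 + 1 / (1 - \<gamma> * \<rho>)))\<^sup>2))"
    and x: "x \<in> cball xb \<beta>"
  shows "\<exists>z\<in>ball xb \<delta>. \<exists>g. (GDERIV (\<lambda>u. real_of_ereal (moreau_env \<gamma> f u)) z :> g) \<and> z = x - T *\<^sub>R g"
proof -
  define S where "S = cball xb \<delta>"
  define P where "P z = the_elem (prox \<gamma> f z)" for z
  define G where "G z = (1 / \<gamma>) *\<^sub>R (z - P z)" for z
  define F where "F z = z + T *\<^sub>R G z" for z
  define Lp where "Lp = 1 / (1 - \<gamma> * \<rho>)"
  define L where "L = 1 + T / \<gamma> * (1 + Lp)"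
  have gd: "GDERIV (\<lambda>u. real_of_ereal (moreau_env \<gamma> f u)) z :> G z" if "z \<in> S" for z
    using standing_fact_moreau_env(2)[OF sf] that by (simp add: S_def G_def P_def)
  have mono: "(norm (z - w))\<^sup>2 \<le> (z - w) \<bullet> (F z - F w)" if "z \<in> S" "w \<in> S" for z w
  proof -
    have "0 \<le> (G z - G w) \<bullet> (z - w)"
      using convex_on_gderiv_monotone[OF cv _ _ gd gd] that by (simp add: S_def)
    moreover have "(z - w) \<bullet> (F z - F w) = (norm (z - w))\<^sup>2 + T * ((G z - G w) \<bullet> (z - w))"
      by (simp add: F_def power2_norm_eq_inner inner_diff_left inner_diff_right inner_add_left
          inner_add_right inner_commute algebra_simps)
    ultimately show ?thesis using T by simp
  qed
  have lip: "norm (F z - F w) \<le> L * norm (z - w)" if "z \<in> S" "w \<in> S" for z w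
  proof -
    have "norm (P z - P w) \<le> Lp * norm (z - w)"
      using standing_fact_prox_lipschitz[OF sf] that by (simp add: S_def P_def Lp_def dist_norm)
    hence "norm ((z - w) - (P z - P w)) \<le> (1 + Lp) * norm (z - w)"
      using norm_triangle_ineq4[of "z - w" "P z - P w"] by (simp add: algebra_simps)
    hence "T / \<gamma> * norm ((z - w) - (P z - P w)) \<le> T / \<gamma> * ((1 + Lp) * norm (z - w))"
      using T \<gamma> by (intro mult_left_mono) auto
    moreover have "F z - F w = (z - w) + (T / \<gamma>) *\<^sub>R ((z - w) - (P z - P w))"
      by (simp add: F_def G_def algebra_simps)
    hence "norm (F z - F w) \<le> norm (z - w) + T / \<gamma> * norm ((z - w) - (P z - P w))"
      using norm_triangle_ineq[of "z - w" "(T / \<gamma>) *\<^sub>R ((z - w) - (P z - P w))"] T \<gamma> by simp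
    moreover have "norm (z - w) + T / \<gamma> * ((1 + Lp) * norm (z - w)) = L * norm (z - w)"
      by (simp add: L_def algebra_simps add_divide_distrib)
    ultimately show ?thesis by linarith
  qed
  have "F xb = xb"
    using standing_fact_prox_centre[OF sf _ crit] \<delta> by (simp add: F_def G_def P_def)
  moreover have "1 \<le> L" using \<gamma> T by (simp add: L_def Lp_def)
  moreover have "\<sigma> * dist xb x < \<delta> * (1 - sqrt (1 - 2 * \<sigma> + \<sigma>\<^sup>2 * L\<^sup>2))"
  proof -
    have "\<sigma> * dist xb x \<le> \<sigma> * \<beta>" using x \<sigma>(1) by simp
    moreover have "\<sigma> * \<beta> < \<delta> * (1 - sqrt (1 - 2 * \<sigma> + \<sigma>\<^sup>2 * L\<^sup>2))"
      using \<beta> \<sigma>(1) by (simp add: L_def Lp_def field_simps)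
    ultimately show ?thesis by linarith
  qed
  ultimately obtain z where z: "z \<in> ball xb \<delta>" "F z = x"
    using strongly_monotone_lipschitz_locally_onto[of xb \<delta> F L \<sigma> x] mono lip \<sigma>
    unfolding S_def L_def Lp_def by blast
  hence "z = x - T *\<^sub>R G z" by (auto simp: F_def)
  moreover have "z \<in> S" using z(1) by (simp add: S_def)
  ultimately show ?thesis using z(1) gd by blast
qed

text \<open>The step recovers the proximal point: \<open>z - \<gamma> \<nabla>e\<^sub>\<gamma>f(z) = P\<^sub>\<gamma>f(z) =: p\<close> with
  \<open>z = p + \<gamma> v\<close>, \<open>v \<in> \<partial>f(p)\<close>, and then \<open>x = p + \<mu> v\<close>.\<close>

lemma prox_eq_of_backward_step:
  fixes f :: "'a::euclidean_space \<Rightarrow> ereal"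
  assumes sf\<gamma>: "standing_fact_on f \<rho> \<gamma> xb \<delta>" and sf\<mu>: "standing_fact_on f \<rho> \<mu> xb \<delta>"
    and \<gamma>: "\<gamma> > 0" "\<mu> \<noteq> \<gamma>"
    and x: "x \<in> cball xb \<delta>" and z: "z \<in> cball xb \<delta>"
    and gd: "GDERIV (\<lambda>u. real_of_ereal (moreau_env \<gamma> f u)) z :> g"
    and step: "z = x - (\<mu> - \<gamma>) *\<^sub>R g"
  shows "prox \<mu> f x = {z - (\<gamma> / (\<mu> - \<gamma>)) *\<^sub>R (x - z)}"
proof -
  define p where "p = the_elem (prox \<gamma> f z)"
  have "g = (1 / \<gamma>) *\<^sub>R (z - p)"
    using GDERIV_unique[OF gd standing_fact_moreau_env(2)[OF sf\<gamma> z]] by (simp add: p_def)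
  hence g: "\<gamma> *\<^sub>R g = z - p" using \<gamma> by simp
  have "p \<in> prox \<gamma> f z" using standing_fact_prox_singleton[OF sf\<gamma> z] unfolding p_def by (metis singletonI)
  then obtain v where v: "v \<in> limiting_subdiff f p" and "z = p + \<gamma> *\<^sub>R v"
    using standing_fact_mem_prox_iff[OF sf\<gamma> z] by blast
  hence "v = g" using g \<gamma> by simp
  hence "x = p + \<mu> *\<^sub>R v" using step g by (simp add: algebra_simps)
  hence "p \<in> prox \<mu> f x" using standing_fact_mem_prox_iff[OF sf\<mu> x] v by blast
  moreover have "(\<gamma> / (\<mu> - \<gamma>)) *\<^sub>R (x - z) = \<gamma> *\<^sub>R g"
    using step \<gamma> by simp
  hence "z - (\<gamma> / (\<mu> - \<gamma>)) *\<^sub>R (x - z) = p" using g by simp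
  ultimately show ?thesis using standing_fact_prox_singleton[OF sf\<mu> x] by (metis singletonD)
qed

lemma summable_sq_dist_prox_iterates:
  fixes x :: "nat \<Rightarrow> 'a::real_normed_vector"
  assumes proper: "proper_fun f" and bdd: "bounded_below_fun f"
    and lam: "\<And>k. 0 < lam k" "\<And>k. lam k \<le> \<Lambda>"
    and prox: "\<And>k. x (Suc k) \<in> prox (lam k) f (x k)"
  shows "summable (\<lambda>k. (norm (x k - x (Suc k)))\<^sup>2)"
proof -
  obtain m :: real where m: "\<And>y. ereal m \<le> f y" using bdd unfolding bounded_below_fun_def by blast
  define a where "a k = real_of_ereal (f (x (Suc k)))" for k
  have fa: "f (x (Suc k)) = ereal (a k)" for k
    using prox_value_finite[OF proper prox] proper unfolding a_def proper_fun_def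
    by (cases "f (x (Suc k))") auto
  \<comment> \<open>\<open>f (x 0)\<close> may be infinite, so the telescoping starts at \<open>x 1\<close>\<close>
  have descent: "a (Suc k) + (norm (x (Suc (Suc k)) - x (Suc k)))\<^sup>2 / (2 * lam (Suc k)) \<le> a k" for k
    using prox_descent[OF prox[of "Suc k"]] by (simp add: fa)
  have "0 \<le> (norm (x (Suc (Suc k)) - x (Suc k)))\<^sup>2 / (2 * lam (Suc k))" for k
    using lam(1)[of "Suc k"] by simp
  hence dec: "a (Suc k) \<le> a k" for k using descent[of k] by (meson add_increasing2 order.trans order_refl)
  have bound: "(norm (x (Suc k) - x (Suc (Suc k))))\<^sup>2 \<le> 2 * \<Lambda> * (a k - a (Suc k))" for k
  proof -
    have "(norm (x (Suc (Suc k)) - x (Suc k)))\<^sup>2 \<le> 2 * lam (Suc k) * (a k - a (Suc k))"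
      using descent[of k] lam(1)[of "Suc k"] by (simp add: field_simps)
    also have "\<dots> \<le> 2 * \<Lambda> * (a k - a (Suc k))"
      using dec[of k] lam(2)[of "Suc k"] by (intro mult_right_mono) auto
    finally show ?thesis by (simp add: norm_minus_commute)
  qed
  have "decseq a" using dec by (rule decseq_SucI)
  moreover have "m \<le> a k" for k using m[of "x (Suc k)"] by (simp add: fa)
  ultimately obtain l where "a \<longlonglongrightarrow> l" using decseq_convergent by blast
  hence "summable (\<lambda>k. 2 * \<Lambda> * (a k - a (Suc k)))"
    by (intro summable_mult telescope_summable')
  hence "summable (\<lambda>k. (norm (x (Suc k) - x (Suc (Suc k))))\<^sup>2)"
    by (rule summable_comparison_test'[where N = 0]) (use bound in auto)
  thus ?thesis by (subst summable_Suc_iff[symmetric])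
qed

lemma backward_iterates_proximal:
  fixes f :: "'a::euclidean_space \<Rightarrow> ereal" and x z :: "nat \<Rightarrow> 'a"
  assumes proper: "proper_fun f" and bdd: "bounded_below_fun f"
    and crit: "0 \<in> limiting_subdiff f xb" and \<rho>: "0 < \<rho>"
    and \<gamma>: "\<And>k. 0 < gam k" and lam_gam: "\<And>k. gam k < lam k" and lam_rho: "\<And>k. lam k * \<rho> < 1"
    and fact_gam: "\<And>k. standing_fact_on f \<rho> (gam k) xb \<delta>"
    and fact_lam: "\<And>k. standing_fact_on f \<rho> (lam k) xb \<delta>"
    and cvx_lam: "\<And>k. convex_on (cball xb \<delta>) (\<lambda>x. real_of_ereal (moreau_env (lam k) f x))"
    and \<beta>: "0 \<le> \<beta>" "\<beta> < \<delta>" and x0: "x 0 \<in> cball xb \<beta>"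
    and alg: "\<forall>k. x k \<in> cball xb \<beta> \<longrightarrow> z k \<in> ball xb \<delta> \<and>
        (\<exists>g. (GDERIV (\<lambda>u. real_of_ereal (moreau_env (gam k) f u)) (z k) :> g) \<and>
          z k = x k - (lam k - gam k) *\<^sub>R g) \<and>
        x (Suc k) = z k - (gam k / (lam k - gam k)) *\<^sub>R (x k - z k)"
  shows "(\<forall>k. prox (lam k) f (x k) = {x (Suc k)} \<and> x k \<in> cball xb \<beta>) \<and>
      summable (\<lambda>k. (norm (x k - x (Suc k)))\<^sup>2)"
proof -
  have prox_step: "prox (lam k) f (x k) = {x (Suc k)}" if xk: "x k \<in> cball xb \<beta>" for k
  proof -
    obtain g where "z k \<in> ball xb \<delta>"
      and "GDERIV (\<lambda>u. real_of_ereal (moreau_env (gam k) f u)) (z k) :> g"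
      and "z k = x k - (lam k - gam k) *\<^sub>R g"
      and "x (Suc k) = z k - (gam k / (lam k - gam k)) *\<^sub>R (x k - z k)"
      using alg xk by blast
    moreover have "x k \<in> cball xb \<delta>" using xk \<beta> by auto
    ultimately show ?thesis
      using prox_eq_of_backward_step[OF fact_gam fact_lam \<gamma>, of k k] lam_gam[of k] by auto
  qed
  have lam_pos: "0 < lam k" for k using \<gamma>[of k] lam_gam[of k] by linarith
  have in_ball: "x k \<in> cball xb \<beta>" for k
  proof (induction k)
    case (Suc k)
    have "dist (the_elem (prox (lam k) f (x k))) xb \<le> dist (x k) xb"
      using prox_dist_centre_le[OF fact_lam cvx_lam lam_pos lam_rho crit \<beta> Suc] .
    thus ?case using prox_step[OF Suc] Suc by (simp add: dist_commute)
  qed (fact x0)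
  have "summable (\<lambda>k. (norm (x k - x (Suc k)))\<^sup>2)"
  proof (rule summable_sq_dist_prox_iterates[OF proper bdd lam_pos])
    show "lam k \<le> 1 / \<rho>" for k using lam_rho[of k] \<rho> by (simp add: field_simps less_imp_le)
    show "x (Suc k) \<in> prox (lam k) f (x k)" for k using prox_step[OF in_ball] by simp
  qed
  with prox_step in_ball show ?thesis by blast
qed

theorem proposition4p1:
  fixes f :: "'a::euclidean_space \<Rightarrow> ereal"
    and \<rho> lamb \<delta> \<beta> :: real
    and xb :: 'a
    and gam lam sig :: "nat \<Rightarrow> real"
  assumes f_proper: "proper_fun f"
    and f_lsc: "lsc_fun f"
    and f_bdd: "bounded_below_fun f"
    and f_wc: "weakly_convex_on \<rho> UNIV f"
    and rho_pos: "\<rho> > 0"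
    and xb_dom: "f xb < \<infinity>"
    and xb_crit: "0 \<in> limiting_subdiff f xb"
    and lamb_pos: "lamb > 0"
    and bdd_gamma: "bounded (range gam)"
    and bdd_lambda: "bounded (range lam)"
    and params: "\<And>k. lamb < 2 * gam k \<and> 2 * gam k < lam k \<and> lam k < 1 / \<rho>"
    and delta_pos: "\<delta> > 0"
    and fact_gamma: "\<And>k. standing_fact_on f \<rho> (gam k) xb \<delta>"
    and fact_lambda: "\<And>k. standing_fact_on f \<rho> (lam k) xb \<delta>"
    and env_convex_gamma: "\<And>k. convex_on (cball xb \<delta>) (\<lambda>x. real_of_ereal (moreau_env (gam k) f x))"
    and env_convex_lambda: "\<And>k. convex_on (cball xb \<delta>) (\<lambda>x. real_of_ereal (moreau_env (lam k) f x))"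
    and sigma: "\<And>k. 0 < sig k \<and>
        sig k < 2 / (1 + (lam k - gam k) / gam k * (1 + 1 / (1 - gam k * \<rho>)))\<^sup>2"
    and beta_pos: "\<beta> > 0"
    and beta: "\<And>k. \<beta> < \<delta> \<and>
        \<beta> < \<delta> / sig k * (1 - sqrt (1 - 2 * sig k + (sig k)\<^sup>2 *
              (1 + (lam k - gam k) / gam k * (1 + 1 / (1 - gam k * \<rho>)))\<^sup>2))"
  shows "(\<forall>k. \<forall>x\<in>cball xb \<beta>. \<exists>z\<in>ball xb \<delta>. \<exists>g.
            (GDERIV (\<lambda>u. real_of_ereal (moreau_env (gam k) f u)) z :> g) \<and>
            z = x - (lam k - gam k) *\<^sub>R g)
       \<and> (\<forall>x z :: nat \<Rightarrow> 'a.
            x 0 \<in> cball xb \<beta> \<longrightarrow>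
            (\<forall>k. x k \<in> cball xb \<beta> \<longrightarrow>
                 z k \<in> ball xb \<delta> \<and>
                 (\<exists>g. (GDERIV (\<lambda>u. real_of_ereal (moreau_env (gam k) f u)) (z k) :> g) \<and>
                      z k = x k - (lam k - gam k) *\<^sub>R g) \<and>
                 x (Suc k) = z k - (gam k / (lam k - gam k)) *\<^sub>R (x k - z k)) \<longrightarrow>
            (\<forall>k. prox (lam k) f (x k) = {x (Suc k)} \<and> x k \<in> cball xb \<beta>) \<and>
            summable (\<lambda>k. (norm (x k - x (Suc k)))\<^sup>2))"
proof -
  have \<gamma>: "0 < gam k" and T: "0 < lam k - gam k" and lam_rho: "lam k * \<rho> < 1" for k
    using params[of k] lamb_pos rho_pos by (auto simp: field_simps)
  have \<gamma>\<rho>: "gam k * \<rho> < 1" for k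
    using mult_strict_right_mono[of "gam k" "lam k" \<rho>] T[of k] rho_pos lam_rho[of k] by linarith
  have "\<exists>z\<in>ball xb \<delta>. \<exists>g. (GDERIV (\<lambda>u. real_of_ereal (moreau_env (gam k) f u)) z :> g) \<and>
      z = x - (lam k - gam k) *\<^sub>R g" if "x \<in> cball xb \<beta>" for k x
    using backward_step_exists[OF fact_gamma env_convex_gamma \<gamma> \<gamma>\<rho> T xb_crit delta_pos] sigma beta that
    by blast
  moreover note backward_iterates_proximal[where gam = gam and lam = lam, OF f_proper f_bdd xb_crit
      rho_pos \<gamma> _ lam_rho fact_gamma fact_lambda env_convex_lambda _ conjunct1[OF beta]]
  moreover have "gam k < lam k" for k using T[of k] by simp
  ultimately show ?thesis using less_imp_le[OF beta_pos] by blast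
qed

end
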